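(* Let $f:\mathbb{R}^n\to\mathbb{R}$ satisfy: (A1) $f\in C^\infty(\mathbb{R}^n)$; (A2) there is $M>0$ with $f(x)>0$ for all $x\notin B(0,M)$; (A3) $\nabla f(p)\neq0$ for all $p\in\mathcal{B}:=\{p:f(p)=0\}$, with $\mathcal{B}\neq\emptyset$. Let $d(x)=\min_{q\in\mathcal{B}}\|x-q\|$ and $\Omega_\sigma=\{x:d(x)<\sigma\}$. Let $\beta\in(0,1)$ and let $\sigma_2>0$ be such that for all $p\in\mathcal{B}$ and all $0<r<\sigma_2$ one has $\mathcal{B}\cap B(p,r)\subseteq\Gamma_r(p)$, where $\Gamma_r(p)=\{p+v: |v^T\nabla f(p)|<\beta r\|\nabla f(p)\|\}$. Let $x\in\Omega_{\sigma_2}$, let $p\in\mathcal{B}$ with $d(x)=\|x-p\|$, and let $r=d(x)$. Then the hyperplane \[R=\{p+v:\ v\in\mathbb{R}^n,\ v^T\nabla f(p)=-\mathrm{sgn}(f(x))\,\beta r\|\nabla f(p)\|\}\] satisfies $\mathrm{sgn}(f(y))=-\mathrm{sgn}(f(x))$ for all $y\in R\cap B(p,r)$.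
   Context: $\|\cdot\|$ is the Euclidean norm, $B(p,r)$ the open Euclidean ball, $\mathrm{sgn}$ the sign function. Such a $\sigma_2>0$ exists for every $\beta\in(0,1)$ under (A1)–(A3). *)

theory Defs
  imports "HOL-Analysis.Analysis"
begin

definition grad :: "('a::euclidean_space \<Rightarrow> real) \<Rightarrow> 'a \<Rightarrow> 'a" where
  "grad f p = (\<Sum>i\<in>Basis. frechet_derivative f (at p) i *\<^sub>R i)"

fun Ck :: "nat \<Rightarrow> ('a::euclidean_space \<Rightarrow> real) \<Rightarrow> bool" where
  "Ck 0 f = continuous_on UNIV f"
| "Ck (Suc k) f = ((\<forall>x. f differentiable (at x)) \<and>
      (\<forall>i\<in>Basis. Ck k (\<lambda>x. frechet_derivative f (at x) i)))"

definition smooth :: "('a::euclidean_space \<Rightarrow> real) \<Rightarrow> bool" where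
  "smooth f = (\<forall>k. Ck k f)"

end

(*
  Replacing f by -f we may assume f x > 0; write g = grad f p. No point p + u with u in the
  truncated open cone V = {u. |u| < r, u \<bullet> g + \<beta> |g| |u| < 0} is a zero of f: applying the
  cone condition at p with radii decreasing to |u|, a zero p + u satisfies |u \<bullet> g| \<le> \<beta> |u| |g|.
  V is convex, hence connected, so f has constant sign on p + V. But V contains the part of the
  hyperplane R inside B(p, r), and also -t g for small t > 0, where f < 0 since -g is a descent
  direction of f at p.
*)
theory Submission
  imports Defs
begin

lemma has_derivative_grad:
  fixes f :: "'a::euclidean_space \<Rightarrow> real"
  assumes "f differentiable (at p)"
  shows "(f has_derivative (\<lambda>h. h \<bullet> grad f p)) (at p)"
proof -
  let ?F = "frechet_derivative f (at p)"
  have deriv: "(f has_derivative ?F) (at p)"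
    using assms frechet_derivative_works by blast
  then have "linear ?F"
    by (rule has_derivative_linear)
  have "?F = (\<lambda>h. h \<bullet> grad f p)"
  proof
    fix h
    have "?F h = ?F (\<Sum>i\<in>Basis. (h \<bullet> i) *\<^sub>R i)"
      by (simp add: euclidean_representation)
    also have "\<dots> = (\<Sum>i\<in>Basis. (h \<bullet> i) * ?F i)"
      using \<open>linear ?F\<close> by (simp add: linear_sum linear_scale)
    also have "\<dots> = h \<bullet> grad f p"
      unfolding grad_def by (simp add: inner_sum_right mult.commute)
    finally show "?F h = h \<bullet> grad f p" .
  qed
  with deriv show ?thesis
    by simp
qed

lemma smooth_imp_differentiable:
  assumes "smooth f"
  shows "f differentiable (at z)"
proof -
  have "Ck (Suc 0) f"
    using assms unfolding smooth_def ..
  then show ?thesis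
    by simp
qed

lemma eventually_less_along_descent_direction:
  fixes f :: "'a::real_inner \<Rightarrow> real"
  assumes "(f has_derivative (\<lambda>h. h \<bullet> g)) (at p)" and "w \<bullet> g < 0"
  shows "\<forall>\<^sub>F t in at_right 0. f (p + t *\<^sub>R w) < f p"
proof -
  have line: "((\<lambda>t::real. p + t *\<^sub>R w) has_derivative (\<lambda>t. t *\<^sub>R w)) (at 0)"
    by (auto intro!: derivative_eq_intros)
  have "(f has_derivative (\<lambda>h. h \<bullet> g)) (at (p + 0 *\<^sub>R w))"
    using assms(1) by simp
  from diff_chain_at[OF line this]
  have "((\<lambda>t. f (p + t *\<^sub>R w)) has_derivative (\<lambda>t. t *\<^sub>R w \<bullet> g)) (at 0)"
    by (simp add: o_def)
  then have "((\<lambda>t. f (p + t *\<^sub>R w)) has_real_derivative w \<bullet> g) (at 0)"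
    by (simp add: has_field_derivative_def mult_commute_abs)
  from DERIV_neg_dec_right[OF this assms(2)] show ?thesis
    by (auto simp: eventually_at_right_field)
qed

lemma convex_strict_sublevel:
  assumes "convex_on S h"
  shows "convex {x\<in>S. h x < b}"
proof (rule convexI)
  fix x y and u v :: real
  assume x: "x \<in> {x\<in>S. h x < b}" and y: "y \<in> {x\<in>S. h x < b}"
    and uv: "0 \<le> u" "0 \<le> v" "u + v = 1"
  have "u *\<^sub>R x + v *\<^sub>R y \<in> S"
    using convexD[OF convex_on_imp_convex[OF assms]] x y uv by blast
  moreover have "h (u *\<^sub>R x + v *\<^sub>R y) \<le> u * h x + v * h y"
    using assms x y uv unfolding convex_on_def by blast
  moreover have "u * h x + v * h y < b"
    using x y uv by (intro convex_bound_lt) auto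
  ultimately show "u *\<^sub>R x + v *\<^sub>R y \<in> {x\<in>S. h x < b}"
    by simp
qed

lemma convex_on_inner_add_norm:
  fixes a :: "'a::real_inner"
  assumes "0 \<le> c"
  shows "convex_on UNIV (\<lambda>u. u \<bullet> a + c * norm u)"
proof -
  have "convex_on UNIV (\<lambda>u. u \<bullet> a)"
    by (simp add: convex_on_def inner_add_left)
  moreover have "convex_on UNIV (\<lambda>u. c * norm u)"
    using convex_on_dist[of UNIV 0] assms by (auto intro!: convex_on_cmul simp: dist_norm)
  ultimately show ?thesis
    by (rule convex_on_add)
qed

lemma abs_inner_le_of_cone_condition:
  fixes g u :: "'a::real_inner"
  assumes cone: "\<forall>r. 0 < r \<and> r < \<sigma> \<longrightarrow> Z \<inter> ball p r \<subseteq> {p + v | v. \<bar>v \<bullet> g\<bar> < \<beta> * r * norm g}"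
    and "p + u \<in> Z" and "norm u < \<sigma>"
  shows "\<bar>u \<bullet> g\<bar> \<le> \<beta> * norm u * norm g"
proof (rule tendsto_lowerbound)
  show "((\<lambda>r. \<beta> * r * norm g) \<longlongrightarrow> \<beta> * norm u * norm g) (at_right (norm u))"
    by (intro tendsto_intros)
  have "\<bar>u \<bullet> g\<bar> < \<beta> * r * norm g" if "norm u < r" "r < \<sigma>" for r
  proof -
    have "0 < r"
      using that(1) norm_ge_zero[of u] by linarith
    have "p + u \<in> Z \<inter> ball p r"
      using assms(2) that by (simp add: dist_norm)
    then have "p + u \<in> {p + v | v. \<bar>v \<bullet> g\<bar> < \<beta> * r * norm g}"
      using cone \<open>0 < r\<close> that(2) by blast
    then show ?thesis
      by auto
  qed
  then show "\<forall>\<^sub>F r in at_right (norm u). \<bar>u \<bullet> g\<bar> \<le> \<beta> * r * norm g"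
    unfolding eventually_at_right_field using assms(3) by (auto intro!: less_imp_le)
qed simp

lemma connected_zero_free_imp_neg:
  fixes h :: "'a::topological_space \<Rightarrow> real"
  assumes "connected S" "continuous_on S h" "0 \<notin> h ` S"
    and "a \<in> S" "b \<in> S" "h a < 0"
  shows "h b < 0"
proof (rule ccontr)
  assume "\<not> h b < 0"
  then have "0 \<in> h ` S"
    using connectedD_interval[OF connected_continuous_image[OF assms(2,1)]] assms(4-6)
    by (meson image_eqI linorder_not_less less_imp_le)
  with assms(3) show False ..
qed

definition descent_cone :: "'a::real_inner \<Rightarrow> real \<Rightarrow> real \<Rightarrow> 'a set" where
  "descent_cone g c r = {u \<in> ball 0 r. u \<bullet> g + c * norm u < 0}"

lemma convex_descent_cone:
  assumes "0 \<le> c"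
  shows "convex (descent_cone g c r)"
proof -
  have "convex_on (ball 0 r) (\<lambda>u. u \<bullet> g + c * norm u)"
    using assms by (intro convex_on_subset[OF convex_on_inner_add_norm subset_UNIV convex_ball])
  then show ?thesis
    unfolding descent_cone_def by (rule convex_strict_sublevel)
qed

lemma eventually_in_descent_cone:
  fixes g :: "'a::real_inner"
  assumes "0 < r" and "0 \<le> c" and "c < norm g"
  shows "\<forall>\<^sub>F t in at_right 0. t *\<^sub>R - g \<in> descent_cone g c r"
  unfolding eventually_at_right_field
proof (intro exI conjI allI impI)
  have "0 < norm g"
    using assms(2,3) by linarith
  with assms(1) show "0 < r / norm g"
    by simp
  fix t :: real
  assume "0 < t" "t < r / norm g"
  then have "norm (t *\<^sub>R - g) < r"
    using \<open>0 < norm g\<close> by (simp add: pos_less_divide_eq)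
  moreover have "t *\<^sub>R - g \<bullet> g + c * norm (t *\<^sub>R - g) = t * norm g * (c - norm g)"
    using \<open>0 < t\<close> by (simp add: algebra_simps dot_square_norm power2_eq_square)
  moreover have "t * norm g * (c - norm g) < 0"
    using assms(3) \<open>0 < t\<close> \<open>0 < norm g\<close> by (simp add: mult_pos_neg)
  ultimately show "t *\<^sub>R - g \<in> descent_cone g c r"
    by (simp add: descent_cone_def)
qed

lemma cone_condition_imp_descent_cone_disjoint:
  fixes g :: "'a::real_inner"
  assumes cone: "\<forall>r'. 0 < r' \<and> r' < \<sigma> \<longrightarrow>
        Z \<inter> ball p r' \<subseteq> {p + v | v. \<bar>v \<bullet> g\<bar> < \<beta> * r' * norm g}"
    and "r \<le> \<sigma>" and "u \<in> descent_cone g (\<beta> * norm g) r"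
  shows "p + u \<notin> Z"
proof
  assume "p + u \<in> Z"
  have "norm u < \<sigma>" and in_cone: "u \<bullet> g + \<beta> * norm g * norm u < 0"
    using assms(2,3) by (auto simp: descent_cone_def)
  have "\<bar>u \<bullet> g\<bar> \<le> \<beta> * norm u * norm g"
    using abs_inner_le_of_cone_condition[OF cone \<open>p + u \<in> Z\<close> \<open>norm u < \<sigma>\<close>] .
  with in_cone abs_ge_minus_self[of "u \<bullet> g"] show False
    by (simp add: mult.commute mult.left_commute)
qed

lemma hyperplane_ball_in_descent_cone:
  fixes g :: "'a::real_inner"
  assumes "0 < \<beta>" and "g \<noteq> 0" and "v \<bullet> g = - \<beta> * r * norm g" and "norm v < r"
  shows "v \<in> descent_cone g (\<beta> * norm g) r"
proof -
  have "\<beta> * norm g * norm v < \<beta> * norm g * r"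
    using assms by simp
  with assms(3,4) show ?thesis
    by (simp add: descent_cone_def mult.commute mult.left_commute)
qed

lemma cone_condition_imp_neg_on_hyperplane:
  fixes f :: "'a::real_inner \<Rightarrow> real"
  assumes deriv: "(f has_derivative (\<lambda>h. h \<bullet> g)) (at p)" and "g \<noteq> 0"
    and cont: "continuous_on (ball p r) f" and "f p = 0"
    and \<beta>: "0 < \<beta>" "\<beta> < 1" and "r \<le> \<sigma>"
    and cone: "\<forall>r'. 0 < r' \<and> r' < \<sigma> \<longrightarrow>
        {q. f q = 0} \<inter> ball p r' \<subseteq> {p + v | v. \<bar>v \<bullet> g\<bar> < \<beta> * r' * norm g}"
    and v: "v \<bullet> g = - \<beta> * r * norm g" "norm v < r"
  shows "f (p + v) < 0"
proof -
  define V where "V = descent_cone g (\<beta> * norm g) r"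
  have "0 < r"
    using v(2) norm_ge_zero[of v] by linarith
  have "connected V"
    unfolding V_def using \<beta> by (simp add: convex_connected convex_descent_cone)
  have "continuous_on V (\<lambda>u. f (p + u))"
    by (rule continuous_on_compose2[OF cont])
      (auto intro!: continuous_intros simp: V_def descent_cone_def dist_norm)
  have "0 \<notin> (\<lambda>u. f (p + u)) ` V"
    using cone_condition_imp_descent_cone_disjoint[OF cone \<open>r \<le> \<sigma>\<close>] by (force simp: V_def)
  have "v \<in> V"
    unfolding V_def using \<beta>(1) \<open>g \<noteq> 0\<close> v by (rule hyperplane_ball_in_descent_cone)
  have "\<forall>\<^sub>F t in at_right 0. f (p + t *\<^sub>R - g) < 0"
    using eventually_less_along_descent_direction[OF deriv, of "- g"] \<open>g \<noteq> 0\<close> \<open>f p = 0\<close>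
    by simp
  moreover have "\<forall>\<^sub>F t in at_right 0. t *\<^sub>R - g \<in> V"
    unfolding V_def using \<open>0 < r\<close> \<beta> \<open>g \<noteq> 0\<close> by (intro eventually_in_descent_cone) simp_all
  ultimately obtain t where "f (p + t *\<^sub>R - g) < 0" and "t *\<^sub>R - g \<in> V"
    using eventually_happens'[OF trivial_limit_at_right_real eventually_conj] by blast
  then show ?thesis
    using connected_zero_free_imp_neg[OF \<open>connected V\<close> \<open>continuous_on V _\<close> \<open>0 \<notin> _\<close> _ \<open>v \<in> V\<close>]
    by blast
qed

lemma cone_condition_imp_sgn_on_hyperplane:
  fixes f :: "'a::real_inner \<Rightarrow> real"
  assumes deriv: "(f has_derivative (\<lambda>h. h \<bullet> g)) (at p)" and "g \<noteq> 0"
    and cont: "continuous_on (ball p r) f" and "f p = 0"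
    and \<beta>: "0 < \<beta>" "\<beta> < 1" and "r \<le> \<sigma>"
    and cone: "\<forall>r'. 0 < r' \<and> r' < \<sigma> \<longrightarrow>
        {q. f q = 0} \<inter> ball p r' \<subseteq> {p + v | v. \<bar>v \<bullet> g\<bar> < \<beta> * r' * norm g}"
    and "s = 1 \<or> s = -1"
    and v: "v \<bullet> g = - s * \<beta> * r * norm g" "norm v < r"
  shows "sgn (f (p + v)) = - s"
  using \<open>s = 1 \<or> s = -1\<close>
proof
  assume "s = 1"
  then have "f (p + v) < 0"
    using cone_condition_imp_neg_on_hyperplane[OF assms(1-8)] v by simp
  with \<open>s = 1\<close> show ?thesis
    by simp
next
  assume "s = -1"
  have "- f (p + v) < 0"
  proof (rule cone_condition_imp_neg_on_hyperplane[of "\<lambda>z. - f z" "- g"])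
    show "((\<lambda>z. - f z) has_derivative (\<lambda>h. h \<bullet> - g)) (at p)"
      using has_derivative_minus[OF deriv] by simp
  qed (use assms(2-7) cone v \<open>s = -1\<close> in \<open>auto intro: continuous_on_minus\<close>)
  with \<open>s = -1\<close> show ?thesis
    by simp
qed

theorem corollary1:
  fixes f :: "'a::euclidean_space \<Rightarrow> real"
    and M \<beta> \<sigma>\<^sub>2 :: real and x p :: 'a
  assumes A1: "smooth f"
    and A2: "M > 0" "\<forall>z. z \<notin> ball 0 M \<longrightarrow> f z > 0"
    and A3: "\<forall>q. f q = 0 \<longrightarrow> grad f q \<noteq> 0" "{q. f q = 0} \<noteq> {}"
    and beta: "0 < \<beta>" "\<beta> < 1"
    and sigma: "\<sigma>\<^sub>2 > 0"
    and cone: "\<forall>q\<in>{q. f q = 0}. \<forall>r. 0 < r \<and> r < \<sigma>\<^sub>2 \<longrightarrow>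
        {q'. f q' = 0} \<inter> ball q r \<subseteq>
          {q + v | v. \<bar>v \<bullet> grad f q\<bar> < \<beta> * r * norm (grad f q)}"
    and x: "infdist x {q. f q = 0} < \<sigma>\<^sub>2"
    and p: "f p = 0" "infdist x {q. f q = 0} = norm (x - p)"
  shows "\<forall>y \<in> {p + v | v. v \<bullet> grad f p =
                 - sgn (f x) * \<beta> * infdist x {q. f q = 0} * norm (grad f p)}
             \<inter> ball p (infdist x {q. f q = 0}).
           sgn (f y) = - sgn (f x)"
proof
  define r where "r = infdist x {q. f q = 0}"
  fix y
  assume "y \<in> {p + v | v. v \<bullet> grad f p =
                 - sgn (f x) * \<beta> * infdist x {q. f q = 0} * norm (grad f p)}
             \<inter> ball p (infdist x {q. f q = 0})"
  then obtain v where y: "y = p + v" and "norm v < r"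
    and v: "v \<bullet> grad f p = - sgn (f x) * \<beta> * r * norm (grad f p)"
    unfolding r_def by (auto simp: dist_norm)
  then have "f x \<noteq> 0"
    using infdist_zero[of x "{q. f q = 0}"] unfolding r_def by auto
  then have sgn_fx: "sgn (f x) = 1 \<or> sgn (f x) = -1"
    by (simp add: sgn_if)
  have diff: "f differentiable (at z)" for z
    using A1 by (rule smooth_imp_differentiable)
  then have cont: "continuous_on (ball p r) f"
    by (simp add: differentiable_imp_continuous_on differentiable_at_withinI differentiable_on_def)
  have "grad f p \<noteq> 0" and "r \<le> \<sigma>\<^sub>2"
    using A3(1) p(1) x unfolding r_def by auto
  have cone_p: "\<forall>r'. 0 < r' \<and> r' < \<sigma>\<^sub>2 \<longrightarrow> {q. f q = 0} \<inter> ball p r'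
      \<subseteq> {p + v | v. \<bar>v \<bullet> grad f p\<bar> < \<beta> * r' * norm (grad f p)}"
    using cone p(1) by blast
  have "sgn (f (p + v)) = - sgn (f x)"
    by (rule cone_condition_imp_sgn_on_hyperplane[OF has_derivative_grad[OF diff]
          \<open>grad f p \<noteq> 0\<close> cont p(1) beta \<open>r \<le> \<sigma>\<^sub>2\<close> cone_p sgn_fx v \<open>norm v < r\<close>])
  then show "sgn (f y) = - sgn (f x)"
    by (simp add: y)
qed

end
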